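(* Let $f:\mathbb{R}^d\to\mathbb{R}$ be twice differentiable and suppose there is $M>0$ with $\|\nabla^2 f(x)-\nabla^2 f(y)\|_{\mathrm{op}}\le M\|x-y\|$ for all $x,y$. Let $(x_k)_{k\in\mathbb{N}}$ be generated by the inner iteration described in the context. Then for all $k\ge1$, $$f(x_k)-f(x_0)\le\frac{\delta^2k}{2\sigma}-\frac38\frac{\|(k+1)\bar g_k\|^{4/3}}{\sigma^{1/3}}-\frac{\sigma}{8k^2}S_k^2+\frac{M}{12}S_k^{3/2}+\frac{1}{2\sigma}\sum_{i=0}^{k-1}\frac{\|r_i\|^2}{\|s_i\|^2},$$ where $\frac{\|r_i\|^2}{\|s_i\|^2}$ is set to $0$ if $s_i=0$.
   Context: Inner iteration (parameters $\sigma,\delta>0$, $\theta\in(0,1)$): given $x_0\in\mathbb{R}^d$ and a real symmetric matrix $B_0$, for $k=0,1,\dots$: let $m_k(s):=\langle \nabla f(x_k)+\frac{1}{k+1}\sum_{i=0}^k(2i+1)\nabla f(x_i),s\rangle+\frac12\langle B_ks,s\rangle+\frac{\sigma}{4}\|s\|^4$; choose any $s_k$ with $\|\nabla m_k(s_k)\|\le\delta\|s_k\|$; set $x_{k+1}=x_k+s_k$, $r_k=\nabla f(x_{k+1})-\nabla f(x_k)-B_ks_k$, and $B_{k+1}=\frac{1-\theta}{1+\theta}\big(B_k+\frac{r_ks_k^\top+s_kr_k^\top}{\|s_k\|^2}-\frac{\langle r_k,s_k\rangle}{\|s_k\|^4}s_ks_k^\top\big)$. Definitions for $k\ge1$: $\bar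 g_k:=\frac{1}{k(k+1)}\big(\sum_{i=0}^{k-1}(2i+1)\nabla f(x_i)+k\nabla f(x_k)\big)$ and $S_k:=\sum_{i=0}^{k-1}\|s_i\|^2$. *)

theory Defs
  imports "HOL-Analysis.Analysis"
begin

definition model_lin :: "('a::euclidean_space \<Rightarrow> 'a) \<Rightarrow> (nat \<Rightarrow> 'a) \<Rightarrow> nat \<Rightarrow> 'a" where
  "model_lin gf x k = gf (x k) + (1 / real (k + 1)) *\<^sub>R (\<Sum>i\<le>k. real (2 * i + 1) *\<^sub>R gf (x i))"

definition model :: "real \<Rightarrow> ('a::euclidean_space \<Rightarrow> 'a) \<Rightarrow> (nat \<Rightarrow> 'a) \<Rightarrow> (nat \<Rightarrow> 'a \<Rightarrow> 'a) \<Rightarrow> nat \<Rightarrow> 'a \<Rightarrow> real" where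
  "model \<sigma> gf x B k s = model_lin gf x k \<bullet> s + 1/2 * (B k s \<bullet> s) + \<sigma> / 4 * norm s ^ 4"

definition resid :: "('a::euclidean_space \<Rightarrow> 'a) \<Rightarrow> (nat \<Rightarrow> 'a) \<Rightarrow> (nat \<Rightarrow> 'a \<Rightarrow> 'a) \<Rightarrow> (nat \<Rightarrow> 'a) \<Rightarrow> nat \<Rightarrow> 'a" where
  "resid gf x B s k = gf (x (Suc k)) - gf (x k) - B k (s k)"

definition gbar :: "('a::euclidean_space \<Rightarrow> 'a) \<Rightarrow> (nat \<Rightarrow> 'a) \<Rightarrow> nat \<Rightarrow> 'a" where
  "gbar gf x k = (1 / (real k * real (k + 1))) *\<^sub>R
      ((\<Sum>i<k. real (2 * i + 1) *\<^sub>R gf (x i)) + real k *\<^sub>R gf (x k))"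

definition Ssum :: "(nat \<Rightarrow> 'a::euclidean_space) \<Rightarrow> nat \<Rightarrow> real" where
  "Ssum s k = (\<Sum>i<k. norm (s i) ^ 2)"

end

(*
  With G_k = (k+1) gbar_k, the potential Phi_k = 3/8 |G_k|^(4/3) / sigma^(1/3) makes f(x_k) + Phi_k
  decrease by the summand of the bound at every step.  The trapezoid rule for a function with
  M-Lipschitz Hessian gives f(x_(k+1)) - f(x_k) <= <grad f(x_k) + grad f(x_(k+1)), s_k>/2 + M |s_k|^3/12,
  and the averaging weights give grad f(x_k) + grad f(x_(k+1)) = G_(k+1) - k/(k+1) G_k.  Since
  G_(k+1) = grad m_k(s_k) + r_k - sigma |s_k|^2 s_k, completing the square bounds
  <G_(k+1), s_k>/2 + Phi_(k+1) by (delta^2 + |r_k|^2/|s_k|^2)/(2 sigma) - sigma |s_k|^4/8, while the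
  Fenchel-Young inequality for Phi absorbs -k/(k+1) <G_k, s_k>/2 into Phi_k + k/(k+1) sigma |s_k|^4/8.
  Summing, Phi_0 = 0, and the power-mean inequalities
  sum_i |s_i|^4/(i+1) >= S_k^2/k^2 and sum_i |s_i|^3 <= S_k^(3/2) finish the proof.
*)

theory Submission
  imports Defs
begin

(* Fenchel conjugate of t |-> sigma t^4 / 8, evaluated at X / 2. *)
definition conj_quartic :: "real \<Rightarrow> real \<Rightarrow> real" where
  "conj_quartic \<sigma> X = 3/8 * X powr (4/3) / \<sigma> powr (1/3)"

lemma powr_third_power:
  fixes X :: real
  assumes "0 \<le> X" "n \<noteq> 0"
  shows "(X powr (1/3)) ^ n = X powr (real n / 3)"
proof -
  have "(X powr (1/3)) ^ n = (X powr (1/3)) powr (real n)"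
    using assms by (simp add: powr_realpow')
  also have "\<dots> = X powr (real n / 3)" by (simp add: powr_powr)
  finally show ?thesis .
qed

lemma conj_quartic_cube_roots:
  assumes "0 \<le> X" "0 < \<sigma>"
  shows "X = (X powr (1/3)) ^ 3" "\<sigma> = (\<sigma> powr (1/3)) ^ 3"
    and "conj_quartic \<sigma> X = 3/8 * (X powr (1/3)) ^ 4 / \<sigma> powr (1/3)"
  using assms powr_third_power[of X 3] powr_third_power[of \<sigma> 3] powr_third_power[of X 4]
  by (auto simp: conj_quartic_def)

lemma conj_quartic_Fenchel_Young:
  assumes X: "0 \<le> X" and \<sigma>: "0 < \<sigma>" and t: "0 \<le> t"
  shows "X * t / 2 \<le> conj_quartic \<sigma> X + \<sigma> / 8 * t ^ 4"
proof -
  define y q p where "y = X powr (1/3)" and "q = \<sigma> powr (1/3)" and "p = \<sigma> powr (1/3) * t"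
  have q: "q > 0" "0 \<le> p" using \<sigma> t by (simp_all add: q_def p_def)
  have "0 \<le> (y - p) ^ 2 * (3 * y ^ 2 + 2 * y * p + p ^ 2)"
    using q by (simp add: y_def)
  then have "4 * y ^ 3 * p \<le> 3 * y ^ 4 + p ^ 4"
    by (simp add: algebra_simps power2_eq_square power3_eq_cube power4_eq_xxxx)
  moreover have "(y ^ 3 * t / 2) * (8 * q) = 4 * y ^ 3 * p"
    by (simp add: p_def q_def)
  moreover have "(3/8 * y ^ 4 / q + q ^ 3 / 8 * t ^ 4) * (8 * q) = 3 * y ^ 4 + p ^ 4"
    using q by (simp add: p_def q_def distrib_right power_mult_distrib power4_eq_xxxx power3_eq_cube)
  ultimately have "y ^ 3 * t / 2 \<le> 3/8 * y ^ 4 / q + q ^ 3 / 8 * t ^ 4"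
    using q by (metis mult_le_cancel_right_pos zero_less_mult_iff zero_less_numeral)
  then show ?thesis
    using conj_quartic_cube_roots[OF X \<sigma>] by (simp add: y_def q_def)
qed

lemma conj_quartic_le_quadratic:
  assumes X: "0 \<le> X" and \<sigma>: "0 < \<sigma>" and t: "0 < t"
  shows "conj_quartic \<sigma> X \<le> X ^ 2 / (4 * \<sigma> * t ^ 2) + \<sigma> / 8 * t ^ 4"
proof -
  define y q where "y = X powr (1/3)" and "q = \<sigma> powr (1/3)"
  define z w where "z = y ^ 2" and "w = q ^ 2 * t ^ 2"
  have q: "q > 0" using \<sigma> by (simp add: q_def)
  have "0 \<le> (z - w) ^ 2 * (2 * z + w)" by (simp add: z_def w_def)
  then have "3 * z ^ 2 * w \<le> 2 * z ^ 3 + w ^ 3"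
    by (simp add: algebra_simps power2_eq_square power3_eq_cube)
  moreover have "(3/8 * y ^ 4 / q) * (8 * q ^ 3 * t ^ 2) = 3 * z ^ 2 * w"
    using q by (simp add: z_def w_def power2_eq_square power3_eq_cube power4_eq_xxxx)
  moreover have "((y ^ 3) ^ 2 / (4 * q ^ 3 * t ^ 2) + q ^ 3 / 8 * t ^ 4) * (8 * q ^ 3 * t ^ 2) = 2 * z ^ 3 + w ^ 3"
    using q t by (simp add: z_def w_def distrib_right power2_eq_square power3_eq_cube power4_eq_xxxx)
  ultimately have "3/8 * y ^ 4 / q \<le> (y ^ 3) ^ 2 / (4 * q ^ 3 * t ^ 2) + q ^ 3 / 8 * t ^ 4"
    using q t by (metis mult_le_cancel_right_pos zero_less_mult_iff zero_less_numeral zero_less_power)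
  then show ?thesis
    using conj_quartic_cube_roots[OF X \<sigma>] by (simp add: y_def q_def)
qed

lemma inner_le_conj_quartic:
  fixes G s :: "'a::real_inner"
  assumes "0 < \<sigma>"
  shows "G \<bullet> s / 2 \<le> conj_quartic \<sigma> (norm G) + \<sigma> / 8 * norm s ^ 4"
proof -
  have "G \<bullet> s / 2 \<le> norm G * norm s / 2"
    by (simp add: norm_cauchy_schwarz divide_right_mono)
  also have "\<dots> \<le> conj_quartic \<sigma> (norm G) + \<sigma> / 8 * norm s ^ 4"
    using conj_quartic_Fenchel_Young[OF norm_ge_zero[of G] assms norm_ge_zero[of s]] by simp
  finally show ?thesis .
qed

lemma damped_inner_le_conj_quartic:
  fixes G s :: "'a::real_inner"
  assumes "0 < \<sigma>" "0 \<le> a" "a \<le> 1"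
  shows "- a * (G \<bullet> s) / 2 \<le> conj_quartic \<sigma> (norm G) + a * \<sigma> / 8 * norm s ^ 4"
proof -
  have "a ^ 4 \<le> a"
    using assms(2,3) power_decreasing[of 1 4 a] by simp
  then have "\<sigma> / 8 * norm (- (a *\<^sub>R s)) ^ 4 \<le> a * \<sigma> / 8 * norm s ^ 4"
    using assms(1,2) by (simp add: power_mult_distrib mult_right_mono)
  moreover have "- a * (G \<bullet> s) = G \<bullet> - (a *\<^sub>R s)" by simp
  ultimately show ?thesis
    using inner_le_conj_quartic[OF assms(1), of G "- (a *\<^sub>R s)"] by linarith
qed

lemma inner_plus_conj_quartic_le:
  fixes E r s :: "'a::real_inner"
  assumes \<sigma>: "0 < \<sigma>" and E: "norm E \<le> \<delta> * norm s" and r: "s = 0 \<Longrightarrow> r = 0"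
  defines "G \<equiv> E + r - (\<sigma> * norm s ^ 2) *\<^sub>R s"
  shows "G \<bullet> s / 2 + conj_quartic \<sigma> (norm G)
           \<le> \<delta> ^ 2 / (2 * \<sigma>) + (if s = 0 then 0 else norm r ^ 2 / norm s ^ 2) / (2 * \<sigma>) - \<sigma> / 8 * norm s ^ 4"
proof (cases "s = 0")
  case True
  then show ?thesis using E r \<sigma> by (simp add: G_def conj_quartic_def)
next
  case False
  define t where "t = norm s"
  have t: "0 < t" using False by (simp add: t_def)
  have "norm (E + r) ^ 2 \<le> (norm E + norm r) ^ 2"
    by (simp add: norm_triangle_ineq power_mono)
  also have "\<dots> \<le> 2 * norm E ^ 2 + 2 * norm r ^ 2"
    using zero_le_power2[of "norm E - norm r"] by (simp add: power2_eq_square algebra_simps)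
  also have "norm E ^ 2 \<le> \<delta> ^ 2 * t ^ 2"
    using E power_mono[OF E] by (simp add: t_def power_mult_distrib)
  finally have Er: "norm (E + r) ^ 2 \<le> 2 * \<delta> ^ 2 * t ^ 2 + 2 * norm r ^ 2" by simp
  \<comment> \<open>completing the square: \<open>G = (E + r) - c s\<close> with \<open>c = \<sigma> t ^ 2\<close>\<close>
  have "G \<bullet> s / 2 + norm G ^ 2 / (4 * \<sigma> * t ^ 2) = norm (E + r) ^ 2 / (4 * \<sigma> * t ^ 2) - \<sigma> / 4 * t ^ 4"
    using \<sigma> t unfolding G_def t_def
    by (simp add: power2_norm_eq_inner inner_diff_left inner_diff_right inner_commute field_simps)
       (simp add: power2_eq_square power4_eq_xxxx algebra_simps flip: power2_norm_eq_inner)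
  moreover have "conj_quartic \<sigma> (norm G) \<le> norm G ^ 2 / (4 * \<sigma> * t ^ 2) + \<sigma> / 8 * t ^ 4"
    using conj_quartic_le_quadratic[OF _ \<sigma> t] by simp
  moreover have "norm (E + r) ^ 2 / (4 * \<sigma> * t ^ 2) \<le> \<delta> ^ 2 / (2 * \<sigma>) + norm r ^ 2 / t ^ 2 / (2 * \<sigma>)"
  proof -
    have "norm (E + r) ^ 2 / (4 * \<sigma> * t ^ 2) \<le> (2 * \<delta> ^ 2 * t ^ 2 + 2 * norm r ^ 2) / (4 * \<sigma> * t ^ 2)"
      using Er \<sigma> t by (simp add: divide_right_mono)
    also have "\<dots> = \<delta> ^ 2 / (2 * \<sigma>) + norm r ^ 2 / t ^ 2 / (2 * \<sigma>)"
      using \<sigma> t by (simp add: field_simps)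
    finally show ?thesis .
  qed
  ultimately show ?thesis using False by (simp add: t_def)
qed

lemma trapezoid_rule_error:
  fixes \<phi> \<phi>' \<phi>'' :: "real \<Rightarrow> real"
  assumes d1: "\<And>\<tau>. (\<phi> has_real_derivative \<phi>' \<tau>) (at \<tau>)"
    and d2: "\<And>\<tau>. (\<phi>' has_real_derivative \<phi>'' \<tau>) (at \<tau>)"
    and lip: "\<And>\<tau> \<upsilon>. \<bar>\<phi>'' \<tau> - \<phi>'' \<upsilon>\<bar> \<le> L * \<bar>\<tau> - \<upsilon>\<bar>"
    and ab: "a \<le> b"
  shows "\<phi> b - \<phi> a \<le> (b - a) * (\<phi>' a + \<phi>' b) / 2 + L * (b - a) ^ 3 / 12"
proof -
  define m where "m = (a + b) / 2"
  \<comment> \<open>the error of the trapezoid rule on \<open>[m - \<tau>, m + \<tau>]\<close>, minus its bound\<close>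
  define \<psi> where "\<psi> \<tau> = \<phi> (m + \<tau>) - \<phi> (m - \<tau>) - \<tau> * (\<phi>' (m + \<tau>) + \<phi>' (m - \<tau>)) - 2/3 * L * \<tau> ^ 3"
    for \<tau>
  have \<psi>': "(\<psi> has_real_derivative - \<tau> * (\<phi>'' (m + \<tau>) - \<phi>'' (m - \<tau>)) - 2 * L * \<tau> ^ 2) (at \<tau>)" for \<tau>
    unfolding \<psi>_def
    by (rule derivative_eq_intros DERIV_chain2[OF d1] DERIV_chain2[OF d2] refl | simp)+
  have \<psi>'_nonpos: "- \<tau> * (\<phi>'' (m + \<tau>) - \<phi>'' (m - \<tau>)) - 2 * L * \<tau> ^ 2 \<le> 0" if "0 \<le> \<tau>" for \<tau>
  proof -
    have "\<bar>\<phi>'' (m + \<tau>) - \<phi>'' (m - \<tau>)\<bar> \<le> 2 * L * \<tau>"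
      using lip[of "m + \<tau>" "m - \<tau>"] that by simp
    then have "\<tau> * (\<phi>'' (m - \<tau>) - \<phi>'' (m + \<tau>)) \<le> \<tau> * (2 * L * \<tau>)"
      using that by (intro mult_left_mono) (auto simp: abs_le_iff)
    then show ?thesis by (simp add: power2_eq_square algebra_simps)
  qed
  have "\<psi> ((b - a) / 2) \<le> \<psi> 0"
  proof (rule DERIV_nonpos_imp_nonincreasing[of 0 "(b - a) / 2" \<psi>])
    show "0 \<le> (b - a) / 2" using ab by simp
  next
    fix \<tau> :: real
    assume "0 \<le> \<tau>" "\<tau> \<le> (b - a) / 2"
    then show "\<exists>y. (\<psi> has_real_derivative y) (at \<tau>) \<and> y \<le> 0"
      using \<psi>' \<psi>'_nonpos by blast
  qed
  moreover have "m + (b - a) / 2 = b" "m - (b - a) / 2 = a"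
    by (simp_all add: m_def field_simps)
  ultimately have "\<phi> b - \<phi> a - (b - a) / 2 * (\<phi>' b + \<phi>' a) - 2/3 * L * ((b - a) / 2) ^ 3 \<le> 0"
    by (simp add: \<psi>_def)
  moreover have "2/3 * L * ((b - a) / 2) ^ 3 = L * (b - a) ^ 3 / 12"
    by (simp add: power_divide)
  moreover have "(b - a) / 2 * (\<phi>' b + \<phi>' a) = (b - a) * (\<phi>' a + \<phi>' b) / 2"
    by simp
  ultimately show ?thesis
    by linarith
qed

lemma Lipschitz_Hessian_trapezoid:
  fixes f :: "'a::real_inner \<Rightarrow> real"
  assumes grad: "\<And>y. (f has_derivative (\<lambda>h. gf y \<bullet> h)) (at y)"
    and hess: "\<And>y. (gf has_derivative Hf y) (at y)"
    and lip: "\<And>y z. onorm (\<lambda>v. Hf y v - Hf z v) \<le> M * norm (y - z)"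
  shows "f (x + h) - f x \<le> (gf x + gf (x + h)) \<bullet> h / 2 + M / 12 * norm h ^ 3"
proof -
  have line: "((\<lambda>\<tau>. x + \<tau> *\<^sub>R h) has_derivative (\<lambda>d. d *\<^sub>R h)) (at \<tau>)" for \<tau>
    by (auto intro!: derivative_eq_intros)
  have Hf_scale: "Hf y (d *\<^sub>R v) = d *\<^sub>R Hf y v" for y d v
    using has_derivative_linear[OF hess] by (simp add: linear_scale)
  have d1: "((\<lambda>\<tau>. f (x + \<tau> *\<^sub>R h)) has_real_derivative gf (x + \<tau> *\<^sub>R h) \<bullet> h) (at \<tau>)" for \<tau>
    using has_derivative_compose[OF line grad] by (rule has_derivative_imp_has_field_derivative) simp
  have d2: "((\<lambda>\<tau>. gf (x + \<tau> *\<^sub>R h) \<bullet> h) has_real_derivative Hf (x + \<tau> *\<^sub>R h) h \<bullet> h) (at \<tau>)" for \<tau>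
    using has_derivative_inner_left[OF has_derivative_compose[OF line hess]]
    by (rule has_derivative_imp_has_field_derivative) (simp add: Hf_scale)
  have "\<bar>Hf (x + \<tau> *\<^sub>R h) h \<bullet> h - Hf (x + \<upsilon> *\<^sub>R h) h \<bullet> h\<bar> \<le> M * norm h ^ 3 * \<bar>\<tau> - \<upsilon>\<bar>" for \<tau> \<upsilon>
  proof -
    define p q where "p = x + \<tau> *\<^sub>R h" and "q = x + \<upsilon> *\<^sub>R h"
    have "bounded_linear (\<lambda>v. Hf p v - Hf q v)"
      using has_derivative_bounded_linear[OF hess] by (intro bounded_linear_sub)
    then have "norm (Hf p h - Hf q h) \<le> onorm (\<lambda>v. Hf p v - Hf q v) * norm h"
      by (rule onorm)
    also have "\<dots> \<le> M * norm (p - q) * norm h"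
      using lip[of p q] by (simp add: mult_right_mono)
    also have "norm (p - q) = \<bar>\<tau> - \<upsilon>\<bar> * norm h"
      by (simp add: p_def q_def flip: scaleR_diff_left)
    finally have "\<bar>(Hf p h - Hf q h) \<bullet> h\<bar> \<le> M * (\<bar>\<tau> - \<upsilon>\<bar> * norm h) * norm h * norm h"
      using Cauchy_Schwarz_ineq2[of "Hf p h - Hf q h" h] by (smt (verit) mult_right_mono norm_ge_zero)
    then show ?thesis
      by (simp add: p_def q_def inner_diff_left power3_eq_cube algebra_simps)
  qed
  from trapezoid_rule_error[OF d1 d2 this, of 0 1] show ?thesis
    by (simp add: inner_add_left)
qed

lemma scaled_gbar_eq:
  "real k *\<^sub>R (real (k + 1) *\<^sub>R gbar gf x k)
     = (\<Sum>i<k. real (2 * i + 1) *\<^sub>R gf (x i)) + real k *\<^sub>R gf (x k)"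
  by (cases "k = 0") (simp_all add: gbar_def)

lemma scaled_gbar_Suc_eq_model_lin:
  "real (Suc j + 1) *\<^sub>R gbar gf x (Suc j) = model_lin gf x j + gf (x (Suc j)) - gf (x j)"
proof -
  have "real (Suc j) *\<^sub>R (real (Suc j + 1) *\<^sub>R gbar gf x (Suc j))
      = (\<Sum>i\<le>j. real (2 * i + 1) *\<^sub>R gf (x i)) + real (Suc j) *\<^sub>R gf (x (Suc j))"
    using scaled_gbar_eq[of "Suc j"] by (simp add: lessThan_Suc_atMost)
  also have "\<dots> = real (Suc j) *\<^sub>R (model_lin gf x j + gf (x (Suc j)) - gf (x j))"
    by (simp add: model_lin_def algebra_simps del: of_nat_Suc)
  finally show ?thesis
    by (simp only: scaleR_cancel_left) simp
qed

lemma gradient_pair_eq_scaled_gbar: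
  "gf (x j) + gf (x (Suc j))
     = real (Suc j + 1) *\<^sub>R gbar gf x (Suc j) - (real j / real (j + 1)) *\<^sub>R (real (j + 1) *\<^sub>R gbar gf x j)"
proof -
  define G0 G1 W where "G0 = real (j + 1) *\<^sub>R gbar gf x j"
    and "G1 = real (Suc j + 1) *\<^sub>R gbar gf x (Suc j)"
    and "W = (\<Sum>i<j. real (2 * i + 1) *\<^sub>R gf (x i))"
  have "real (Suc j) *\<^sub>R G1 = W + real (2 * j + 1) *\<^sub>R gf (x j) + real (Suc j) *\<^sub>R gf (x (Suc j))"
    unfolding G1_def W_def using scaled_gbar_eq[of "Suc j" gf x] by simp
  moreover have "real j *\<^sub>R G0 = W + real j *\<^sub>R gf (x j)"
    unfolding G0_def W_def using scaled_gbar_eq[of j gf x] by simp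
  ultimately have "real (Suc j) *\<^sub>R G1 - real j *\<^sub>R G0
      = (real (2 * j + 1) *\<^sub>R gf (x j) - real j *\<^sub>R gf (x j)) + real (Suc j) *\<^sub>R gf (x (Suc j))"
    by simp
  also have "real (2 * j + 1) *\<^sub>R gf (x j) - real j *\<^sub>R gf (x j) = real (Suc j) *\<^sub>R gf (x j)"
    by (simp flip: scaleR_diff_left)
  also have "\<dots> + real (Suc j) *\<^sub>R gf (x (Suc j)) = real (Suc j) *\<^sub>R (gf (x j) + gf (x (Suc j)))"
    by (simp only: scaleR_add_right)
  finally have "real (Suc j) *\<^sub>R (gf (x j) + gf (x (Suc j))) = real (Suc j) *\<^sub>R G1 - real j *\<^sub>R G0" ..
  also have "\<dots> = real (Suc j) *\<^sub>R (G1 - (real j / real (j + 1)) *\<^sub>R G0)"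
    by (simp add: scaleR_diff_right)
  finally show ?thesis
    unfolding G0_def G1_def by (simp only: scaleR_cancel_left) simp
qed

lemma quartic_model_has_derivative:
  fixes c s :: "'a::euclidean_space"
  assumes lin: "linear B" and sym: "\<And>u v. B u \<bullet> v = u \<bullet> B v"
  shows "((\<lambda>s. c \<bullet> s + 1/2 * (B s \<bullet> s) + \<sigma> / 4 * norm s ^ 4) has_derivative
           (\<lambda>h. (c + B s + (\<sigma> * norm s ^ 2) *\<^sub>R s) \<bullet> h)) (at s)"
proof -
  have norm4: "norm v ^ 4 = (v \<bullet> v) ^ 2" for v :: 'a
    by (simp flip: power2_norm_eq_inner power_mult)
  have "((\<lambda>s. c \<bullet> s + 1/2 * (B s \<bullet> s) + \<sigma> / 4 * (s \<bullet> s) ^ 2) has_derivative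
         (\<lambda>h. c \<bullet> h + 1/2 * (B s \<bullet> h + B h \<bullet> s) + \<sigma> / 4 * (real 2 * (s \<bullet> s) ^ (2 - 1) * (s \<bullet> h + h \<bullet> s)))) (at s)"
    using linear_imp_has_derivative[OF lin]
    by (intro derivative_eq_intros) auto
  moreover have "(\<lambda>h. c \<bullet> h + 1/2 * (B s \<bullet> h + B h \<bullet> s) + \<sigma> / 4 * (real 2 * (s \<bullet> s) ^ (2 - 1) * (s \<bullet> h + h \<bullet> s)))
      = (\<lambda>h. (c + B s + (\<sigma> * norm s ^ 2) *\<^sub>R s) \<bullet> h)"
  proof
    fix h
    have "B h \<bullet> s = B s \<bullet> h" using sym[of h s] by (simp add: inner_commute)
    then show "c \<bullet> h + 1/2 * (B s \<bullet> h + B h \<bullet> s) + \<sigma> / 4 * (real 2 * (s \<bullet> s) ^ (2 - 1) * (s \<bullet> h + h \<bullet> s))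
      = (c + B s + (\<sigma> * norm s ^ 2) *\<^sub>R s) \<bullet> h"
      by (simp add: inner_add_left inner_commute[of h s] power2_norm_eq_inner algebra_simps)
  qed
  ultimately show ?thesis
    by (simp add: norm4)
qed

lemma symmetric_rank_two_update:
  fixes B :: "'a::real_inner \<Rightarrow> 'a" and s r :: 'a and \<rho> c \<kappa> :: real
  assumes lin: "linear B" and sym: "\<And>u v. B u \<bullet> v = u \<bullet> B v"
  defines "B' \<equiv> \<lambda>v. \<rho> *\<^sub>R (B v + c *\<^sub>R ((s \<bullet> v) *\<^sub>R r + (r \<bullet> v) *\<^sub>R s) - (\<kappa> * (s \<bullet> v)) *\<^sub>R s)"
  shows "linear B'" and "B' u \<bullet> v = u \<bullet> B' v"
proof -
  show "linear B'"
  proof (rule linearI)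
    show "B' (u + v) = B' u + B' v" for u v
      by (simp only: B'_def linear_add[OF lin] inner_add_right distrib_left scaleR_add_left
            scaleR_add_right scaleR_diff_right) (simp add: algebra_simps)
    show "B' (a *\<^sub>R u) = a *\<^sub>R B' u" for a u
      by (simp add: B'_def linear_scale[OF lin] scaleR_add_right scaleR_diff_right) (simp add: algebra_simps)
  qed
  have "B' u \<bullet> v = \<rho> * (u \<bullet> B v + c * ((s \<bullet> u) * (r \<bullet> v) + (r \<bullet> u) * (s \<bullet> v)) - \<kappa> * (s \<bullet> u) * (s \<bullet> v))"
    by (simp add: B'_def inner_add_left inner_diff_left sym)
  also have "\<dots> = u \<bullet> B' v"
    by (simp add: B'_def inner_add_right inner_diff_right inner_commute algebra_simps)
  finally show "B' u \<bullet> v = u \<bullet> B' v" .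
qed

lemma sum_squared_div_square_le:
  fixes u :: "nat \<Rightarrow> real"
  shows "(\<Sum>i<k. u i) ^ 2 / real k ^ 2 \<le> (\<Sum>i<k. u i ^ 2 / real (i + 1))"
proof (cases "k = 0")
  case False
  then have k: "0 < real k" by simp
  have "(\<Sum>i<k. u i) ^ 2 / real k ^ 2 \<le> (\<Sum>i<k. u i ^ 2) * real k / real k ^ 2"
    using sum_squared_le_sum_of_squares[of u "{..<k}"] k by (simp add: divide_right_mono)
  also have "\<dots> = (\<Sum>i<k. u i ^ 2 / real k)"
    using k by (simp add: power2_eq_square sum_divide_distrib)
  also have "\<dots> \<le> (\<Sum>i<k. u i ^ 2 / real (i + 1))"
    by (intro sum_mono divide_left_mono) auto
  finally show ?thesis .
qed simp

lemma sum_cubes_le_sum_squares_powr: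
  fixes t :: "nat \<Rightarrow> real"
  assumes "\<And>i. 0 \<le> t i"
  shows "(\<Sum>i<k. t i ^ 3) \<le> (\<Sum>i<k. t i ^ 2) powr (3/2)"
proof -
  define S where "S = (\<Sum>i<k. t i ^ 2)"
  have "0 \<le> S" by (simp add: S_def sum_nonneg)
  have "t i \<le> sqrt S" if "i < k" for i
    using member_le_sum[of i "{..<k}" "\<lambda>i. t i ^ 2"] that assms[of i]
    by (simp add: S_def real_le_rsqrt)
  then have "(\<Sum>i<k. t i * t i ^ 2) \<le> (\<Sum>i<k. sqrt S * t i ^ 2)"
    by (intro sum_mono mult_right_mono) auto
  also have "\<dots> = sqrt S * S"
    by (simp add: S_def sum_distrib_left)
  also have "\<dots> = S powr (3/2)"
    using \<open>0 \<le> S\<close> powr_add[of S 1 "1/2"] by (cases "S = 0") (simp_all add: powr_half_sqrt)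
  finally show ?thesis by (simp add: S_def power2_eq_square power3_eq_cube mult.assoc)
qed

lemma quartic_potential_step:
  fixes f :: "'a::euclidean_space \<Rightarrow> real" and x s :: "nat \<Rightarrow> 'a" and E :: 'a
  assumes grad: "\<And>y. (f has_derivative (\<lambda>h. gf y \<bullet> h)) (at y)"
    and hess: "\<And>y. (gf has_derivative Hf y) (at y)"
    and lip: "\<And>y z. onorm (\<lambda>v. Hf y v - Hf z v) \<le> M * norm (y - z)"
    and \<sigma>: "0 < \<sigma>"
    and lin: "linear (B j)" and sym: "\<And>u v. B j u \<bullet> v = u \<bullet> B j v"
    and E: "(model \<sigma> gf x B j has_derivative (\<lambda>h. E \<bullet> h)) (at (s j))" "norm E \<le> \<delta> * norm (s j)"
    and xs: "x (Suc j) = x j + s j"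
  shows "f (x (Suc j)) + conj_quartic \<sigma> (norm (real (Suc j + 1) *\<^sub>R gbar gf x (Suc j)))
           - (f (x j) + conj_quartic \<sigma> (norm (real (j + 1) *\<^sub>R gbar gf x j)))
         \<le> \<delta>^2 / (2 * \<sigma>)
           + (if s j = 0 then 0 else norm (resid gf x B s j) ^ 2 / norm (s j) ^ 2) / (2 * \<sigma>)
           - \<sigma> / 8 * norm (s j) ^ 4 / real (j + 1) + M / 12 * norm (s j) ^ 3"
proof -
  define G0 G1 r a where "G0 = real (j + 1) *\<^sub>R gbar gf x j"
    and "G1 = real (Suc j + 1) *\<^sub>R gbar gf x (Suc j)"
    and "r = resid gf x B s j" and "a = real j / real (j + 1)"
  have "model \<sigma> gf x B j = (\<lambda>s. model_lin gf x j \<bullet> s + 1/2 * (B j s \<bullet> s) + \<sigma> / 4 * norm s ^ 4)"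
    by (simp add: fun_eq_iff model_def)
  then have "(model \<sigma> gf x B j has_derivative
      (\<lambda>h. (model_lin gf x j + B j (s j) + (\<sigma> * norm (s j) ^ 2) *\<^sub>R s j) \<bullet> h)) (at (s j))"
    using quartic_model_has_derivative[OF lin sym] by simp
  then have "(\<lambda>h. E \<bullet> h) = (\<lambda>h. (model_lin gf x j + B j (s j) + (\<sigma> * norm (s j) ^ 2) *\<^sub>R s j) \<bullet> h)"
    by (rule has_derivative_unique[OF E(1)])
  then have "E = model_lin gf x j + B j (s j) + (\<sigma> * norm (s j) ^ 2) *\<^sub>R s j"
    by (simp add: fun_eq_iff vector_eq_rdot)
  then have G1: "G1 = E + r - (\<sigma> * norm (s j) ^ 2) *\<^sub>R s j"
    unfolding G1_def scaled_gbar_Suc_eq_model_lin by (simp add: r_def resid_def)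
  have "r = 0" if "s j = 0"
    using that xs linear_0[OF lin] by (simp add: r_def resid_def)
  then have descent: "G1 \<bullet> s j / 2 + conj_quartic \<sigma> (norm G1)
      \<le> \<delta>^2 / (2 * \<sigma>) + (if s j = 0 then 0 else norm r ^ 2 / norm (s j) ^ 2) / (2 * \<sigma>)
         - \<sigma> / 8 * norm (s j) ^ 4"
    unfolding G1 using inner_plus_conj_quartic_le[OF \<sigma> E(2)] by blast
  have "0 \<le> a" "a \<le> 1" by (simp_all add: a_def)
  then have damped: "- a * (G0 \<bullet> s j) / 2 \<le> conj_quartic \<sigma> (norm G0) + a * \<sigma> / 8 * norm (s j) ^ 4"
    using damped_inner_le_conj_quartic[OF \<sigma>] by blast
  have "f (x (Suc j)) - f (x j) \<le> (gf (x j) + gf (x (Suc j))) \<bullet> s j / 2 + M / 12 * norm (s j) ^ 3"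
    using Lipschitz_Hessian_trapezoid[OF grad hess lip, of "x j" "s j"] xs by simp
  also have "(gf (x j) + gf (x (Suc j))) \<bullet> s j = G1 \<bullet> s j - a * (G0 \<bullet> s j)"
    by (simp add: gradient_pair_eq_scaled_gbar G0_def G1_def a_def inner_diff_left)
  finally have trapezoid: "f (x (Suc j)) - f (x j) \<le> G1 \<bullet> s j / 2 - a * (G0 \<bullet> s j) / 2 + M / 12 * norm (s j) ^ 3"
    by (simp add: diff_divide_distrib)
  moreover have "\<sigma> / 8 * norm (s j) ^ 4 - a * \<sigma> / 8 * norm (s j) ^ 4 = \<sigma> / 8 * norm (s j) ^ 4 / real (j + 1)"
    by (simp add: a_def field_simps)
  ultimately show ?thesis
    unfolding G0_def[symmetric] G1_def[symmetric] r_def[symmetric] using descent damped by linarith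
qed

theorem lemma4p3:
  fixes f :: "'a::euclidean_space \<Rightarrow> real"
    and gf :: "'a \<Rightarrow> 'a" and Hf :: "'a \<Rightarrow> 'a \<Rightarrow> 'a"
    and M \<sigma> \<delta> \<theta> :: real
    and x s :: "nat \<Rightarrow> 'a" and B :: "nat \<Rightarrow> 'a \<Rightarrow> 'a"
    and k :: nat
  assumes grad: "\<And>y. (f has_derivative (\<lambda>h. gf y \<bullet> h)) (at y)"
    and hess: "\<And>y. (gf has_derivative Hf y) (at y)"
    and M_pos: "M > 0"
    and lip: "\<And>y z. onorm (\<lambda>v. Hf y v - Hf z v) \<le> M * norm (y - z)"
    and \<sigma>_pos: "\<sigma> > 0" and \<delta>_pos: "\<delta> > 0"
    and \<theta>: "0 < \<theta>" "\<theta> < 1"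
    and B0_lin: "linear (B 0)"
    and B0_sym: "\<And>u v. B 0 u \<bullet> v = u \<bullet> B 0 v"
    and step: "\<And>j. \<exists>G. (model \<sigma> gf x B j has_derivative (\<lambda>h. G \<bullet> h)) (at (s j))
                      \<and> norm G \<le> \<delta> * norm (s j)"
    and xs: "\<And>j. x (Suc j) = x j + s j"
    and Bupd: "\<And>j. B (Suc j) = (\<lambda>v. ((1 - \<theta>) / (1 + \<theta>)) *\<^sub>R
                 (B j v + (1 / norm (s j) ^ 2) *\<^sub>R
                     ((s j \<bullet> v) *\<^sub>R resid gf x B s j + (resid gf x B s j \<bullet> v) *\<^sub>R s j)
                  - ((resid gf x B s j \<bullet> s j) / norm (s j) ^ 4 * (s j \<bullet> v)) *\<^sub>R s j))"
    and k: "k \<ge> 1"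
  shows "f (x k) - f (x 0) \<le>
           \<delta>^2 * real k / (2 * \<sigma>)
         - 3 / 8 * norm (real (k + 1) *\<^sub>R gbar gf x k) powr (4/3) / \<sigma> powr (1/3)
         - \<sigma> / (8 * real k ^ 2) * (Ssum s k) ^ 2
         + M / 12 * Ssum s k powr (3/2)
         + 1 / (2 * \<sigma>) * (\<Sum>i<k. if s i = 0 then 0
                                   else norm (resid gf x B s i) ^ 2 / norm (s i) ^ 2)"
proof -
  define \<Phi> where "\<Phi> i = conj_quartic \<sigma> (norm (real (i + 1) *\<^sub>R gbar gf x i))" for i
  define R where "R i = (if s i = 0 then 0 else norm (resid gf x B s i) ^ 2 / norm (s i) ^ 2)" for i
  have B_sym: "linear (B j) \<and> (\<forall>u v. B j u \<bullet> v = u \<bullet> B j v)" for j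
  proof (induction j)
    case 0
    show ?case using B0_lin B0_sym by blast
  next
    case (Suc j)
    then show ?case
      unfolding Bupd using symmetric_rank_two_update[of "B j"] by blast
  qed
  have step_bound: "f (x (Suc j)) + \<Phi> (Suc j) - (f (x j) + \<Phi> j)
      \<le> \<delta>^2 / (2 * \<sigma>) + R j / (2 * \<sigma>) - \<sigma> / 8 * norm (s j) ^ 4 / real (j + 1) + M / 12 * norm (s j) ^ 3" for j
  proof -
    obtain E where "(model \<sigma> gf x B j has_derivative (\<lambda>h. E \<bullet> h)) (at (s j))" "norm E \<le> \<delta> * norm (s j)"
      using step[of j] by blast
    with B_sym[of j] show ?thesis
      unfolding \<Phi>_def R_def using quartic_potential_step[OF grad hess lip \<sigma>_pos, of B j] xs by blast
  qed
  have "f (x k) + \<Phi> k - (f (x 0) + \<Phi> 0) = (\<Sum>j<k. f (x (Suc j)) + \<Phi> (Suc j) - (f (x j) + \<Phi> j))"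
    by (rule sum_lessThan_telescope[symmetric])
  also have "\<dots> \<le> (\<Sum>j<k. \<delta>^2 / (2 * \<sigma>) + R j / (2 * \<sigma>) - \<sigma> / 8 * norm (s j) ^ 4 / real (j + 1)
                          + M / 12 * norm (s j) ^ 3)"
    by (intro sum_mono step_bound)
  also have "\<dots> = \<delta>^2 * real k / (2 * \<sigma>) + (\<Sum>j<k. R j) / (2 * \<sigma>)
      - \<sigma> / 8 * (\<Sum>j<k. (norm (s j) ^ 2) ^ 2 / real (j + 1)) + M / 12 * (\<Sum>j<k. norm (s j) ^ 3)"
    by (simp add: sum.distrib sum_subtractf sum_divide_distrib sum_distrib_left flip: power_mult)
  also have "\<dots> \<le> \<delta>^2 * real k / (2 * \<sigma>) + (\<Sum>j<k. R j) / (2 * \<sigma>)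
      - \<sigma> / 8 * (Ssum s k ^ 2 / real k ^ 2) + M / 12 * Ssum s k powr (3/2)"
    using sum_squared_div_square_le[of "\<lambda>j. norm (s j) ^ 2" k]
      sum_cubes_le_sum_squares_powr[of "\<lambda>j. norm (s j)" k] \<sigma>_pos M_pos
    unfolding Ssum_def by (intro add_mono diff_mono mult_left_mono) auto
  finally show ?thesis
    by (simp add: \<Phi>_def R_def conj_quartic_def gbar_def sum_divide_distrib)
qed

end
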